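(* Let $a_1\ge1$, $n \ge 1$ and $v \ge 1$ be integers, let $p$ be a prime not dividing $a_1D$, and let $\mathfrak{p}$ be a prime ideal of $\mathcal{O}_K$ lying over $p$. Then $p^v \mid \ell_n$ if and only if $\operatorname{ord}_{\mathfrak{p}^v}(\alpha^2) \mid n$. In particular, $p$ is a primitive divisor of $\ell_n$ if and only if $n = \operatorname{ord}_{\mathfrak{p}}(\alpha^2)$.
   Context: Let $f := X^2 - a_1X - 1$, $D := a_1^2 + 4$, $K := \mathbb{Q}(\sqrt{D})$ (a quadratic field) with ring of integers $\mathcal{O}_K$, and let $\alpha,\beta \in \mathcal{O}_K$ be the roots of $f$ (so $\alpha\beta = -1$, $\alpha+\beta=a_1$, $\alpha$ is a unit). For an ideal $\mathfrak{i}$ of $\mathcal{O}_K$ and $\theta \in \mathcal{O}_K$ invertible modulo $\mathfrak{i}$, $\operatorname{ord}_{\mathfrak{i}}(\theta)$ is the multiplicative order of $\theta$ modulo $\mathfrak{i}$. The Lehmer sequence is $\ell_n := \frac{\alpha^n - (-\beta)^n}{\alpha + \beta}$ for odd $n$ and $\ell_n := \frac{\alpha^n - (-\beta)^n}{\alpha^2 - \beta^2}$ for even $n$ (integers). A prime $p$ is a primitive divisor of $\ell_n$ if $p \mid \ell_n$ but $p \nmid (\alpha^2-\beta^2)^2\ell_1\cdots\ell_{n-1}$, where $(\alpha^2-\beta^2)^2 = a_1^2D$. *)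

theory Defs
  imports "HOL-Analysis.Analysis" "HOL-Algebra.Ideal_Product"
begin

definition qD :: "int \<Rightarrow> int" where
  "qD a1 = a1^2 + 4"

(* K = Q(sqrt D), realised inside the reals (D > 0) *)
definition quadK :: "int \<Rightarrow> real set" where
  "quadK a1 = {of_rat r + of_rat s * sqrt (of_int (qD a1)) | r s. True}"

definition OK :: "int \<Rightarrow> real set" where
  "OK a1 = {x \<in> quadK a1. algebraic_int x}"

definition OK_ring :: "int \<Rightarrow> real ring" where
  "OK_ring a1 = \<lparr> carrier = OK a1, monoid.mult = (*), one = 1, zero = 0, add = (+) \<rparr>"

fun ideal_pow :: "('a, 'b) ring_scheme \<Rightarrow> 'a set \<Rightarrow> nat \<Rightarrow> 'a set" where
  "ideal_pow R I 0 = carrier R"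
| "ideal_pow R I (Suc v) = ideal_prod R I (ideal_pow R I v)"

(* roots of X^2 - a1 X - 1 *)
definition alpha :: "int \<Rightarrow> real" where
  "alpha a1 = (of_int a1 + sqrt (of_int (qD a1))) / 2"

definition beta :: "int \<Rightarrow> real" where
  "beta a1 = (of_int a1 - sqrt (of_int (qD a1))) / 2"

definition ord_mod :: "real set \<Rightarrow> real \<Rightarrow> nat" where
  "ord_mod I \<theta> = (LEAST k. k > 0 \<and> \<theta> ^ k - 1 \<in> I)"

definition lehmer :: "int \<Rightarrow> nat \<Rightarrow> real" where
  "lehmer a1 n = (if odd n
     then (alpha a1 ^ n - (- beta a1) ^ n) / (alpha a1 + beta a1)
     else (alpha a1 ^ n - (- beta a1) ^ n) / (alpha a1 ^ 2 - beta a1 ^ 2))"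

definition rdvd :: "int \<Rightarrow> real \<Rightarrow> bool" where
  "rdvd d x \<longleftrightarrow> (\<exists>z::int. x = of_int (d * z))"

definition primitive_divisor :: "int \<Rightarrow> nat \<Rightarrow> nat \<Rightarrow> bool" where
  "primitive_divisor a1 p n \<longleftrightarrow> prime p \<and> rdvd (int p) (lehmer a1 n) \<and>
     \<not> rdvd (int p) ((alpha a1 ^ 2 - beta a1 ^ 2) ^ 2 * (\<Prod>k\<in>{1..<n}. lehmer a1 k))"

end

theory Submission
  imports Defs
begin

text \<open>Write \<open>A = \<alpha>\<^sup>2\<close>. Since \<open>\<alpha>\<beta> = -1\<close>, \<open>A\<^sup>n - 1 = \<alpha>\<^sup>n c\<^sub>n \<ell>\<^sub>n\<close> where \<open>c\<^sub>n\<close> is the denominator in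
  the definition of \<open>\<ell>\<^sub>n\<close> and \<open>c\<^sub>n\<^sup>2 \<in> {a\<^sub>1\<^sup>2, a\<^sub>1\<^sup>2D}\<close> is an integer prime to \<open>p\<close>. Hence
  \<open>A\<^sup>n \<equiv> 1 (mod \<pp>\<^sup>v)\<close> iff \<open>\<ell>\<^sub>n \<in> \<pp>\<^sup>v \<inter> \<int>\<close>, and it remains to see \<open>\<pp>\<^sup>v \<inter> \<int> = p\<^sup>v\<int>\<close>. For
  this we find \<open>\<tau> \<notin> \<pp>\<close> with \<open>\<tau>\<pp> \<subseteq> p\<O>\<^sub>K\<close>, using the characterisation of \<open>\<O>\<^sub>K\<close> by
  integral trace and norm; then \<open>\<tau>\<^sup>v\<pp>\<^sup>v \<subseteq> p\<^sup>v\<O>\<^sub>K\<close>, and primality of \<open>\<pp>\<close> strips the factors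
  \<open>p\<close> off an integer in \<open>\<pp>\<^sup>v\<close> one at a time. The exponents \<open>n\<close> with \<open>A\<^sup>n \<equiv> 1\<close> form a
  subgroup of \<open>\<int>\<close>, nontrivial by pigeonhole on the Lucas sequence, which gives the first
  claim; the second follows because \<open>p\<close> divides none of \<open>a\<^sub>1\<^sup>2D \<ell>\<^sub>1 \<cdots> \<ell>\<^sub>n\<^sub>-\<^sub>1\<close> exactly when
  no \<open>k < n\<close> is a multiple of the order.\<close>

lemma rdvd_of_int_iff [simp]: "rdvd d (of_int x) \<longleftrightarrow> d dvd x"
  unfolding rdvd_def dvd_def by (metis of_int_eq_iff)

lemma algebraic_int_of_monic_quadratic:
  fixes x :: "'a :: field"
  assumes "x * x = of_int T * x - of_int N"
  shows "algebraic_int x"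
proof (rule algebraic_int.intros[of "[:of_int N, - of_int T, 1:]"])
  show "lead_coeff [:of_int N, - of_int T, 1:] = (1::'a)" by simp
  show "\<forall>i. coeff [:of_int N, - of_int T, 1:] i \<in> (\<int>::'a set)"
    by (auto simp: coeff_pCons split: nat.splits)
  show "poly [:of_int N, - of_int T, 1:] x = 0" using assms by (simp add: algebra_simps)
qed

lemma square_mod_4: "(x::int)^2 mod 4 = 0 \<or> x^2 mod 4 = 1"
proof -
  have mod_4: "y = 4 * m + c \<Longrightarrow> c = 0 \<or> c = 1 \<Longrightarrow> y mod 4 = 0 \<or> y mod 4 = 1" for y m c :: int
    by auto
  obtain k where "x = 2 * k \<or> x = 2 * k + 1" by (metis oddE evenE)
  then have "x^2 = 4 * (k * k) + 0 \<or> x^2 = 4 * (k * k + k) + 1"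
    by (auto simp: power2_eq_square algebra_simps)
  then show ?thesis using mod_4 by blast
qed

text \<open>Applied to the trace \<open>t\<close> and norm \<open>N\<close> of an element of a quadratic field in which \<open>p\<close>
  is unramified, with \<open>h\<close> the rational part of \<open>(x - conj x) \<surd>d\<close>.\<close>
lemma prime_square_dvd_of_discriminant_square:
  fixes p t N h d :: int
  assumes p: "prime p" and "\<not> p dvd d" and "p dvd t" and "p dvd N"
    and disc: "(t^2 - 4 * N) * d = h^2" and d_mod_4: "p = 2 \<Longrightarrow> d mod 4 = 1"
  shows "p^2 dvd N"
proof (cases "p = 2")
  case False
  have "p dvd t^2 - 4 * N"
    using \<open>p dvd t\<close> \<open>p dvd N\<close> by (simp add: power2_eq_square)
  then have "p dvd h^2" unfolding disc[symmetric] by simp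
  then have "p dvd h" by (rule prime_dvd_power[OF p])
  then have "p^2 dvd (t^2 - 4 * N) * d" unfolding disc by (rule dvd_power_same)
  moreover have "coprime (p^2) d" using p \<open>\<not> p dvd d\<close> by (simp add: prime_imp_coprime)
  ultimately have "p^2 dvd t^2 - 4 * N" by (simp add: coprime_dvd_mult_left_iff)
  moreover have "p^2 dvd t^2" using \<open>p dvd t\<close> by (rule dvd_power_same)
  ultimately have "p^2 dvd t^2 - (t^2 - 4 * N)" by (rule dvd_diff[rotated])
  then have "p^2 dvd 4 * N" by simp
  moreover have "coprime (p^2) 4"
  proof -
    have "\<not> p dvd 2"
      using p False prime_ge_2_int[of p] zdvd_imp_le[of p 2] by linarith
    then have "\<not> p dvd 4" using prime_dvd_mult_iff[OF p, of 2 2] by simp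
    then have "coprime p 4" using prime_imp_coprime[OF p] by simp
    then show ?thesis by simp
  qed
  ultimately show ?thesis by (simp add: coprime_dvd_mult_right_iff)
next
  case True
  have parity: "2 dvd M"
    if "4 dvd H - T + 2 * M" "H mod 4 = 0 \<or> H mod 4 = 1" "T mod 4 = 0 \<or> T mod 4 = 1"
    for H T M :: int using that by presburger
  obtain t' where t': "t = 2 * t'" using \<open>p dvd t\<close> True by blast
  obtain N' where N': "N = 2 * N'" using \<open>p dvd N\<close> True by blast
  have "h^2 = 2 * ((2 * t'^2 - 4 * N') * d)"
    using disc unfolding t' N' by (simp add: power2_eq_square algebra_simps)
  then have "2 dvd h^2" by (metis dvd_triv_left)
  then have "2 dvd h" by simp
  then obtain h' where h': "h = 2 * h'" by blast
  have "d = 4 * (d div 4) + 1" using d_mod_4[OF True] by presburger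
  then obtain e where e: "d = 4 * e + 1" by blast
  have "h'^2 - t'^2 + 2 * N' = 4 * ((t'^2 - 2 * N') * e)"
    using disc unfolding t' N' h' e by (simp add: power2_eq_square algebra_simps)
  then have "4 dvd h'^2 - t'^2 + 2 * N'" by simp
  then have "2 dvd N'" using square_mod_4[of h'] square_mod_4[of t'] by (rule parity)
  then show ?thesis unfolding N' True by auto
qed

lemma exists_consecutive_pair_congruent:
  fixes g :: "nat \<Rightarrow> int" and M :: int
  assumes "M > 0"
  obtains i j where "i < j" "M dvd g j - g i" "M dvd g (Suc j) - g (Suc i)"
proof -
  define f where "f j = (g j mod M, g (Suc j) mod M)" for j
  have "f ` {0..nat (M * M)} \<subseteq> {0..<M} \<times> {0..<M}" unfolding f_def using assms by auto
  then have "card (f ` {0..nat (M * M)}) \<le> card ({0..<M} \<times> {0..<M})"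
    by (intro card_mono) auto
  also have "\<dots> = nat M * nat M" by (simp add: card_cartesian_product)
  also have "\<dots> < card {0..nat (M * M)}" using assms by (simp add: nat_mult_distrib)
  finally have "\<not> inj_on f {0..nat (M * M)}" by (rule pigeonhole)
  then obtain i j where "f i = f j" "i \<noteq> j" unfolding inj_on_def by blast
  then have "M dvd g i - g j" "M dvd g (Suc i) - g (Suc j)"
    unfolding f_def by (auto simp: mod_eq_dvd_iff)
  moreover from this have "M dvd g j - g i" "M dvd g (Suc j) - g (Suc i)"
    by (simp_all add: dvd_diff_commute)
  ultimately show thesis using that[of i j] that[of j i] \<open>i \<noteq> j\<close> by (cases "i < j") auto
qed

lemma ord_mod_dvd_iff:
  fixes I :: "real set" and \<theta> \<eta> :: real
  assumes diff_closed: "\<And>x y. x \<in> I \<Longrightarrow> y \<in> I \<Longrightarrow> x - y \<in> I"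
    and mult_closed: "\<And>x. x \<in> I \<Longrightarrow> \<theta> * x \<in> I" "\<And>x. x \<in> I \<Longrightarrow> \<eta> * x \<in> I"
    and inverse: "\<theta> * \<eta> = 1"
    and finite_order: "\<exists>k>0. \<theta> ^ k - 1 \<in> I"
  shows "0 < ord_mod I \<theta>" and "\<theta> ^ n - 1 \<in> I \<longleftrightarrow> ord_mod I \<theta> dvd n"
proof -
  define S where "S = {k. \<theta> ^ k - 1 \<in> I}"
  have zero: "0 \<in> I" using finite_order diff_closed by fastforce
  have add: "x + y \<in> I" if "x \<in> I" "y \<in> I" for x y
    using diff_closed[OF that(1) diff_closed[OF zero that(2)]] by simp
  have pow_mult: "\<theta> ^ k * x \<in> I" "\<eta> ^ k * x \<in> I" if "x \<in> I" for k x
    using that by (induction k) (simp_all add: mult.assoc mult_closed)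
  have S_add: "a + b \<in> S" if "a \<in> S" "b \<in> S" for a b
  proof -
    have "\<theta> ^ a * (\<theta> ^ b - 1) + (\<theta> ^ a - 1) \<in> I"
      using that unfolding S_def by (intro add pow_mult) auto
    moreover have "\<theta> ^ (a + b) - 1 = \<theta> ^ a * (\<theta> ^ b - 1) + (\<theta> ^ a - 1)"
      by (simp add: power_add algebra_simps)
    ultimately show ?thesis unfolding S_def by (simp only: mem_Collect_eq)
  qed
  have S_diff: "b \<in> S" if "a + b \<in> S" "a \<in> S" for a b
  proof -
    have "\<eta> ^ a * (\<theta> ^ (a + b) - 1) \<in> I" "\<eta> ^ a * (\<theta> ^ a - 1) \<in> I"
      using that pow_mult(2) unfolding S_def by auto
    then have mem: "\<eta> ^ a * (\<theta> ^ (a + b) - 1) - \<eta> ^ a * (\<theta> ^ a - 1) \<in> I" by (rule diff_closed)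
    have unit: "\<eta> ^ a * \<theta> ^ a = 1" by (metis inverse mult.commute power_mult_distrib power_one)
    have "\<eta> ^ a * (\<theta> ^ (a + b) - 1) - \<eta> ^ a * (\<theta> ^ a - 1)
        = (\<eta> ^ a * \<theta> ^ a) * \<theta> ^ b - \<eta> ^ a * \<theta> ^ a"
      by (simp add: power_add algebra_simps)
    then have "\<theta> ^ b - 1 = \<eta> ^ a * (\<theta> ^ (a + b) - 1) - \<eta> ^ a * (\<theta> ^ a - 1)" using unit by simp
    with mem show ?thesis unfolding S_def by (simp only: mem_Collect_eq)
  qed
  define d where "d = ord_mod I \<theta>"
  have d_least: "d = (LEAST k. 0 < k \<and> k \<in> S)" unfolding d_def ord_mod_def S_def by simp
  have d: "0 < d" "d \<in> S" using LeastI_ex[of "\<lambda>k. 0 < k \<and> k \<in> S"] finite_order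
    unfolding d_least S_def by auto
  have d_min: "d \<le> k" if "0 < k" "k \<in> S" for k unfolding d_least by (rule Least_le) (use that in simp)
  show "0 < ord_mod I \<theta>" using d(1) unfolding d_def .
  have multiples: "d * q \<in> S" for q
  proof (induction q)
    case 0
    then show ?case using zero by (simp add: S_def)
  next
    case (Suc q)
    then show ?case using S_add[OF d(2)] by simp
  qed
  show "\<theta> ^ n - 1 \<in> I \<longleftrightarrow> ord_mod I \<theta> dvd n" unfolding d_def[symmetric]
  proof
    assume "\<theta> ^ n - 1 \<in> I"
    then have "d * (n div d) + n mod d \<in> S" unfolding S_def by simp
    then have "n mod d \<in> S" using S_diff multiples by blast
    then have "n mod d = 0" using d_min[of "n mod d"] mod_less_divisor[OF d(1), of n] by fastforce
    then show "d dvd n" by (simp add: dvd_eq_mod_eq_0)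
  next
    assume "d dvd n"
    then show "\<theta> ^ n - 1 \<in> I" using multiples unfolding S_def by auto
  qed
qed

fun lucasU :: "int \<Rightarrow> nat \<Rightarrow> int" where
  "lucasU a 0 = 0"
| "lucasU a (Suc 0) = 1"
| "lucasU a (Suc (Suc n)) = a * lucasU a (Suc n) + lucasU a n"

lemma power_Suc_lucasU:
  fixes x :: "'a :: comm_ring_1"
  assumes root: "x * x = of_int a * x + 1"
  shows "x ^ Suc n = of_int (lucasU a (Suc n)) * x + of_int (lucasU a n)"
proof (induction n)
  case (Suc n)
  have "x ^ Suc (Suc n) = of_int (lucasU a (Suc n)) * (x * x) + of_int (lucasU a n) * x"
    using Suc.IH by (simp add: algebra_simps)
  then show ?case unfolding root by (simp add: algebra_simps)
qed simp

lemma lucasU_even_dvd: "a dvd lucasU a (2 * m)"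
proof (induction m)
  case (Suc m)
  have "lucasU a (2 * Suc m) = a * lucasU a (Suc (2 * m)) + lucasU a (2 * m)"
    by (simp add: numeral_2_eq_2)
  then show ?case using Suc.IH by simp
qed simp

lemma dvd_iff_least_multiple:
  fixes d n :: nat
  assumes "0 < d" "1 \<le> n"
  shows "d dvd n \<and> (\<forall>k\<in>{1..<n}. \<not> d dvd k) \<longleftrightarrow> n = d"
proof
  assume H: "d dvd n \<and> (\<forall>k\<in>{1..<n}. \<not> d dvd k)"
  then have "d \<le> n" using assms by (auto intro: dvd_imp_le)
  moreover have "\<not> d < n"
  proof
    assume "d < n"
    then have "d \<in> {1..<n}" using assms by simp
    then have "\<not> d dvd d" by (rule bspec[OF conjunct2[OF H]])
    then show False by simp
  qed
  ultimately show "n = d" by simp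
qed (auto dest: dvd_imp_le)

section \<open>The field \<open>\<rat>(\<surd>D)\<close>, its ring of integers and the Lehmer sequence\<close>

text \<open>Closure of \<open>OK a1\<close> under \<open>+\<close> and \<open>*\<close> (not in the library for algebraic integers) is
  taken from the ring structure, which the hypothesis \<open>primeideal P (OK_ring a1)\<close> provides.\<close>
locale lehmer_field =
  fixes a1 :: int
  assumes a1_pos: "a1 \<ge> 1" and OK_cring: "cring (OK_ring a1)"
begin

abbreviation "D \<equiv> qD a1"
abbreviation "sqD \<equiv> sqrt (real_of_int (qD a1))"

lemma qD_ge_5: "D \<ge> 5"
proof -
  have "a1^2 \<ge> 1" using a1_pos by (simp add: one_le_power)
  then show ?thesis by (simp add: qD_def)
qed

lemma abs_qD [simp]: "\<bar>real_of_int D\<bar> = real_of_int D"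
  using qD_ge_5 by simp

lemma sqrt_qD_square: "sqD * sqD = of_int D"
  by simp

lemma sqrt_qD_pos: "sqD > 0"
  using qD_ge_5 by simp

lemma sqrt_qD_irrational: "sqD \<notin> \<rat>"
proof
  have "algebraic_int sqD"
    by (rule algebraic_int_of_monic_quadratic[of _ 0 "-D"]) (simp add: sqrt_qD_square)
  moreover assume "sqD \<in> \<rat>"
  ultimately have "sqD \<in> \<int>" by (rule rational_algebraic_int_is_int)
  then obtain k where k: "sqD = of_int k" by (auto elim: Ints_cases)
  then have "real_of_int (k * k) = of_int (a1^2 + 4)" using sqrt_qD_square by (simp add: qD_def)
  then have kk: "k * k = a1 * a1 + 4" unfolding of_int_eq_iff by (simp add: power2_eq_square)
  have "k > a1"
  proof (rule ccontr)
    assume "\<not> k > a1"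
    then have "k * k \<le> a1 * a1" using k sqrt_qD_pos by (intro mult_mono) auto
    then show False using kk by simp
  qed
  define j where "j = k - a1"
  have j: "k = a1 + j" "j \<ge> 1" using \<open>k > a1\<close> unfolding j_def by auto
  then have e: "2 * a1 * j + j * j = 4" using kk by (simp add: algebra_simps)
  show False
  proof (cases "j = 1")
    case True
    then show False using e by presburger
  next
    case False
    then have "j \<ge> 2" using j by linarith
    then have "2 * a1 * j \<ge> 4" and "j * j \<ge> 4"
      using a1_pos mult_mono[of 2 "2 * a1" 2 j] mult_mono[of 2 j 2 j] by auto
    then show False using e by linarith
  qed
qed

lemma quadK_iff: "x \<in> quadK a1 \<longleftrightarrow> (\<exists>r s. x = of_rat r + of_rat s * sqD)"
  unfolding quadK_def by auto

lemma quadK_coords_unique: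
  assumes "of_rat r + of_rat s * sqD = of_rat r' + of_rat s' * sqD"
  shows "r = r' \<and> s = s'"
proof (cases "s = s'")
  case False
  then have "sqD = of_rat ((r - r') / (s' - s))" using assms
    by (simp add: of_rat_divide of_rat_diff field_simps)
  then show ?thesis using sqrt_qD_irrational by simp
qed (use assms in simp)

definition conjK :: "real \<Rightarrow> real" where
  "conjK x = (THE y. \<exists>r s. x = of_rat r + of_rat s * sqD \<and> y = of_rat r - of_rat s * sqD)"

lemma conjK_coords: "conjK (of_rat r + of_rat s * sqD) = of_rat r - of_rat s * sqD"
  unfolding conjK_def by (rule the_equality) (auto dest: quadK_coords_unique)

lemma quadK_add:
  assumes "x \<in> quadK a1" "y \<in> quadK a1"
  shows "x + y \<in> quadK a1" "conjK (x + y) = conjK x + conjK y"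
proof -
  obtain r s r' s' where x: "x = of_rat r + of_rat s * sqD" and y: "y = of_rat r' + of_rat s' * sqD"
    using assms quadK_iff by blast
  have xy: "x + y = of_rat (r + r') + of_rat (s + s') * sqD"
    unfolding x y by (simp add: of_rat_add algebra_simps)
  then show "x + y \<in> quadK a1" unfolding quadK_iff by blast
  show "conjK (x + y) = conjK x + conjK y"
    unfolding xy unfolding x y conjK_coords by (simp add: of_rat_add algebra_simps)
qed

lemma quadK_mult:
  assumes "x \<in> quadK a1" "y \<in> quadK a1"
  shows "x * y \<in> quadK a1" "conjK (x * y) = conjK x * conjK y"
proof -
  obtain r s r' s' where x: "x = of_rat r + of_rat s * sqD" and y: "y = of_rat r' + of_rat s' * sqD"
    using assms quadK_iff by blast
  have "of_rat s * sqD * (of_rat s' * sqD) = of_rat s * of_rat s' * (sqD * sqD)"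
    by (simp only: ac_simps)
  then have sq: "of_rat s * sqD * (of_rat s' * sqD) = of_rat (s * s' * of_int D)"
    by (simp add: of_rat_mult)
  have xy: "x * y = of_rat (r * r' + s * s' * of_int D) + of_rat (r * s' + s * r') * sqD"
    unfolding x y by (simp add: algebra_simps sq of_rat_add of_rat_mult)
  then show "x * y \<in> quadK a1" unfolding quadK_iff by blast
  show "conjK (x * y) = conjK x * conjK y"
    unfolding xy unfolding x y conjK_coords by (simp add: algebra_simps sq of_rat_add of_rat_mult)
qed

lemma quadK_of_rat: "of_rat c \<in> quadK a1" "conjK (of_rat c) = of_rat c"
proof -
  have c: "of_rat c = of_rat c + of_rat 0 * sqD" by simp
  show "of_rat c \<in> quadK a1" unfolding quadK_iff by (rule exI[of _ c], rule exI[of _ 0]) simp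
  show "conjK (of_rat c) = of_rat c" by (subst c, subst conjK_coords) simp
qed

lemma quadK_of_int: "of_int k \<in> quadK a1" "conjK (of_int k) = of_int k"
  using quadK_of_rat[of "of_int k"] by simp_all

lemma quadK_conjK:
  assumes "x \<in> quadK a1"
  shows "conjK x \<in> quadK a1" "conjK (conjK x) = x"
proof -
  obtain r s where x: "x = of_rat r + of_rat s * sqD" using assms quadK_iff by blast
  have cx: "conjK x = of_rat r + of_rat (- s) * sqD" unfolding x conjK_coords by (simp add: of_rat_minus)
  then show "conjK x \<in> quadK a1" unfolding quadK_iff by blast
  have "conjK (conjK x) = of_rat r - of_rat (- s) * sqD" unfolding cx by (rule conjK_coords)
  then show "conjK (conjK x) = x" using x by (simp add: of_rat_minus)
qed

lemma quadK_divide_of_nat: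
  assumes "x \<in> quadK a1"
  shows "x / of_nat m \<in> quadK a1" "conjK (x / of_nat m) = conjK x / of_nat m"
proof -
  have e: "x / of_nat m = of_rat (1 / of_nat m) * x" by (simp add: of_rat_divide)
  show "x / of_nat m \<in> quadK a1" unfolding e by (rule quadK_mult(1)[OF quadK_of_rat(1) assms])
  show "conjK (x / of_nat m) = conjK x / of_nat m"
    unfolding e quadK_mult(2)[OF quadK_of_rat(1) assms] quadK_of_rat(2) by (simp add: of_rat_divide)
qed

lemma trace_norm_coords:
  assumes "x = of_rat r + of_rat s * sqD"
  shows "x + conjK x = of_rat (2 * r)" "x * conjK x = of_rat (r * r - s * s * of_int D)"
proof -
  show "x + conjK x = of_rat (2 * r)" unfolding assms conjK_coords by (simp add: of_rat_mult)
  have "x * conjK x = of_rat r * of_rat r - of_rat s * of_rat s * (sqD * sqD)"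
    unfolding assms conjK_coords by (simp only: algebra_simps)
  then show "x * conjK x = of_rat (r * r - s * s * of_int D)"
    by (simp add: of_rat_mult of_rat_diff)
qed

lemma conjK_poly:
  assumes "\<forall>i. coeff q i \<in> \<int>" and "x \<in> quadK a1"
  shows "poly q x \<in> quadK a1 \<and> conjK (poly q x) = poly q (conjK x)"
  using assms(1)
proof (induction q)
  case (pCons c q)
  obtain k where k: "c = of_int k" using pCons.prems by (metis coeff_pCons_0 Ints_cases)
  have "poly q x \<in> quadK a1" "conjK (poly q x) = poly q (conjK x)"
    using pCons by (metis coeff_pCons_Suc)+
  then show ?case
    using quadK_add[OF quadK_of_int(1) quadK_mult(1)[OF assms(2)]] quadK_mult(2)[OF assms(2)]
      quadK_of_int(2) by (simp add: k)
qed (use quadK_of_int[of 0] in simp)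

lemma OK_ring_simps [simp]:
  "carrier (OK_ring a1) = OK a1" "x \<otimes>\<^bsub>OK_ring a1\<^esub> y = x * y"
  "x \<oplus>\<^bsub>OK_ring a1\<^esub> y = x + y" "\<one>\<^bsub>OK_ring a1\<^esub> = 1" "\<zero>\<^bsub>OK_ring a1\<^esub> = 0"
  by (simp_all add: OK_ring_def)

lemma OK_quadK: "x \<in> OK a1 \<Longrightarrow> x \<in> quadK a1"
  and OK_algebraic_int: "x \<in> OK a1 \<Longrightarrow> algebraic_int x"
  and OK_intro: "x \<in> quadK a1 \<Longrightarrow> algebraic_int x \<Longrightarrow> x \<in> OK a1"
  unfolding OK_def by auto

lemma OK_add: "x \<in> OK a1 \<Longrightarrow> y \<in> OK a1 \<Longrightarrow> x + y \<in> OK a1"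
  and OK_mult: "x \<in> OK a1 \<Longrightarrow> y \<in> OK a1 \<Longrightarrow> x * y \<in> OK a1"
  using cring.cring_simprules(1,5)[OF OK_cring] by simp_all

lemma OK_of_int: "of_int k \<in> OK a1"
  using OK_intro quadK_of_int by simp

lemma OK_of_nat: "of_nat k \<in> OK a1"
  using OK_of_int[of "int k"] by simp

lemma OK_uminus: "x \<in> OK a1 \<Longrightarrow> - x \<in> OK a1"
  using OK_mult[OF OK_of_int[of "-1"]] by simp

lemma OK_diff: "x \<in> OK a1 \<Longrightarrow> y \<in> OK a1 \<Longrightarrow> x - y \<in> OK a1"
  using OK_add[of x "- y"] OK_uminus by simp

lemma OK_power: "x \<in> OK a1 \<Longrightarrow> x ^ k \<in> OK a1"
  by (induction k) (simp_all add: OK_mult OK_of_int[of 1, simplified])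

lemma OK_conjK:
  assumes "x \<in> OK a1"
  shows "conjK x \<in> OK a1"
proof -
  obtain q where q: "lead_coeff q = 1" "\<forall>i. coeff q i \<in> \<int>" "poly q x = 0"
    using OK_algebraic_int[OF assms] by (auto elim: algebraic_int.cases)
  have "poly q (conjK x) = conjK (poly q x)" using conjK_poly[OF q(2) OK_quadK[OF assms]] by simp
  also have "\<dots> = 0" using q(3) quadK_of_int(2)[of 0] by simp
  finally have "algebraic_int (conjK x)" using q by (intro algebraic_int.intros[of q]) auto
  then show ?thesis using OK_intro quadK_conjK(1) OK_quadK assms by blast
qed

lemma OK_trace_norm_Ints:
  assumes "x \<in> OK a1"
  shows "x + conjK x \<in> \<int>" "x * conjK x \<in> \<int>"
proof -
  obtain r s where "x = of_rat r + of_rat s * sqD" using OK_quadK[OF assms] quadK_iff by blast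
  then have "x + conjK x \<in> \<rat>" "x * conjK x \<in> \<rat>" using trace_norm_coords by simp_all
  moreover have "algebraic_int (x + conjK x)" "algebraic_int (x * conjK x)"
    using OK_add OK_mult OK_conjK OK_algebraic_int assms by blast+
  ultimately show "x + conjK x \<in> \<int>" "x * conjK x \<in> \<int>"
    by (simp_all add: rational_algebraic_int_is_int)
qed

theorem OK_iff_trace_norm:
  "x \<in> OK a1 \<longleftrightarrow> x \<in> quadK a1 \<and> x + conjK x \<in> \<int> \<and> x * conjK x \<in> \<int>"
proof (intro iffI conjI)
  assume "x \<in> quadK a1 \<and> x + conjK x \<in> \<int> \<and> x * conjK x \<in> \<int>"
  then obtain T N where K: "x \<in> quadK a1" and T: "x + conjK x = of_int T" and N: "x * conjK x = of_int N"
    by (auto elim!: Ints_cases)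
  have "x * x = of_int T * x - of_int N" by (simp flip: T N add: algebra_simps)
  then show "x \<in> OK a1" using K by (intro OK_intro algebraic_int_of_monic_quadratic)
qed (use OK_quadK OK_trace_norm_Ints in auto)

abbreviation "\<alpha> \<equiv> alpha a1"
abbreviation "\<beta> \<equiv> beta a1"

lemma alpha_plus_beta: "\<alpha> + \<beta> = of_int a1"
  by (simp add: alpha_def beta_def field_simps)

lemma alpha_minus_beta: "\<alpha> - \<beta> = sqD"
  by (simp add: alpha_def beta_def field_simps)

lemma alpha_mult_beta: "\<alpha> * \<beta> = -1"
proof -
  have "\<alpha> * \<beta> = (of_int a1 * of_int a1 - sqD * sqD) / 4"
    by (simp add: alpha_def beta_def field_simps)
  then show ?thesis by (simp add: qD_def power2_eq_square)
qed

lemma alpha_root: "\<alpha> * \<alpha> = of_int a1 * \<alpha> + 1"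
  and beta_root: "\<beta> * \<beta> = of_int a1 * \<beta> + 1"
proof -
  have "\<alpha> * \<alpha> = \<alpha> * (\<alpha> + \<beta>) - \<alpha> * \<beta>" "\<beta> * \<beta> = \<beta> * (\<alpha> + \<beta>) - \<alpha> * \<beta>"
    by (simp_all add: algebra_simps)
  then show "\<alpha> * \<alpha> = of_int a1 * \<alpha> + 1" "\<beta> * \<beta> = of_int a1 * \<beta> + 1"
    unfolding alpha_plus_beta alpha_mult_beta by (simp_all add: algebra_simps)
qed

lemma alpha_OK: "\<alpha> \<in> OK a1" and beta_OK: "\<beta> \<in> OK a1"
proof -
  have "\<alpha> = of_rat (of_int a1 / 2) + of_rat (1 / 2) * sqD"
    "\<beta> = of_rat (of_int a1 / 2) + of_rat (- 1 / 2) * sqD"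
    by (simp_all add: alpha_def beta_def of_rat_divide of_rat_minus field_simps)
  then have "\<alpha> \<in> quadK a1" "\<beta> \<in> quadK a1" unfolding quadK_iff by blast+
  then show "\<alpha> \<in> OK a1" "\<beta> \<in> OK a1"
    using alpha_root beta_root by (auto intro!: OK_intro algebraic_int_of_monic_quadratic[of _ a1 "-1"])
qed

lemma alpha_mult_minus_beta_power: "\<alpha> ^ n * (- \<beta>) ^ n = 1"
  using alpha_mult_beta by (simp flip: power_mult_distrib)

definition lehmer_denom :: "nat \<Rightarrow> real" where
  "lehmer_denom n = (if odd n then \<alpha> + \<beta> else \<alpha>^2 - \<beta>^2)"

lemma lehmer_denom_OK: "lehmer_denom n \<in> OK a1"
  unfolding lehmer_denom_def using OK_add OK_diff OK_power alpha_OK beta_OK by auto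

lemma lehmer_denom_square: "lehmer_denom n ^ 2 = of_int (if odd n then a1^2 else a1^2 * D)"
proof -
  have "\<alpha>^2 - \<beta>^2 = (\<alpha> - \<beta>) * (\<alpha> + \<beta>)" by (simp add: power2_eq_square algebra_simps)
  then have "(\<alpha>^2 - \<beta>^2)^2 = sqD * sqD * of_int a1 ^ 2"
    unfolding alpha_minus_beta alpha_plus_beta by (simp add: power2_eq_square)
  then show ?thesis unfolding lehmer_denom_def by (simp add: alpha_plus_beta)
qed

lemma lehmer_denom_nonzero: "lehmer_denom n \<noteq> 0"
  using lehmer_denom_square[of n] a1_pos qD_ge_5 by (auto split: if_split_asm)

lemma alpha_sq_power_minus_one: "(\<alpha>^2) ^ n - 1 = \<alpha> ^ n * lehmer_denom n * lehmer a1 n"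
proof -
  have "lehmer_denom n * lehmer a1 n = \<alpha> ^ n - (- \<beta>) ^ n"
    using lehmer_denom_nonzero[of n] unfolding lehmer_def lehmer_denom_def by auto
  then have "\<alpha> ^ n * lehmer_denom n * lehmer a1 n = \<alpha> ^ n * \<alpha> ^ n - \<alpha> ^ n * (- \<beta>) ^ n"
    by (simp add: right_diff_distrib mult.assoc)
  then show ?thesis using alpha_mult_minus_beta_power[of n]
    by (simp add: power2_eq_square power_mult_distrib)
qed

lemma lehmer_Ints:
  assumes "n \<ge> 1"
  shows "lehmer a1 n \<in> \<int>"
proof -
  obtain m where m: "n = Suc m" using assms by (cases n) auto
  let ?U = "lucasU a1"
  have "\<alpha> ^ n + \<beta> ^ n = of_int (?U n) * (\<alpha> + \<beta>) + 2 * of_int (?U m)"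
    "\<alpha> ^ n - \<beta> ^ n = of_int (?U n) * (\<alpha> - \<beta>)"
    unfolding m power_Suc_lucasU[OF alpha_root] power_Suc_lucasU[OF beta_root] by (simp_all add: algebra_simps)
  then have sum: "\<alpha> ^ n + \<beta> ^ n = of_int (?U n) * of_int a1 + 2 * of_int (?U m)"
    and diff: "\<alpha> ^ n - \<beta> ^ n = of_int (?U n) * sqD"
    unfolding alpha_plus_beta alpha_minus_beta .
  have "a1 \<noteq> 0" "sqD \<noteq> 0" using a1_pos sqrt_qD_pos by auto
  show ?thesis
  proof (cases "odd n")
    case True
    then have "even m" using m by simp
    then obtain c where c: "?U m = a1 * c" using lucasU_even_dvd by (metis dvd_def evenE)
    have "lehmer a1 n = (\<alpha> ^ n + \<beta> ^ n) / (\<alpha> + \<beta>)" using True unfolding lehmer_def by simp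
    also have "\<dots> = of_int (?U n + 2 * c)"
      unfolding sum alpha_plus_beta c using \<open>a1 \<noteq> 0\<close> by (simp add: field_simps)
    finally show ?thesis by simp
  next
    case False
    then obtain c where c: "?U n = a1 * c" using lucasU_even_dvd by (metis dvd_def evenE)
    have "\<alpha>^2 - \<beta>^2 = (\<alpha> - \<beta>) * (\<alpha> + \<beta>)" by (simp add: power2_eq_square algebra_simps)
    then have "\<alpha>^2 - \<beta>^2 = sqD * of_int a1" unfolding alpha_plus_beta alpha_minus_beta .
    then have "lehmer a1 n = (\<alpha> ^ n - \<beta> ^ n) / (sqD * of_int a1)" using False unfolding lehmer_def by simp
    also have "\<dots> = of_int c"
      unfolding diff c using \<open>a1 \<noteq> 0\<close> \<open>sqD \<noteq> 0\<close> by (simp add: field_simps)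
    finally show ?thesis by simp
  qed
qed

definition lehmerZ :: "nat \<Rightarrow> int" where
  "lehmerZ n = \<lfloor>lehmer a1 n\<rfloor>"

lemma of_int_lehmerZ: "n \<ge> 1 \<Longrightarrow> of_int (lehmerZ n) = lehmer a1 n"
  unfolding lehmerZ_def using lehmer_Ints by (metis floor_of_int Ints_cases)

section \<open>Ideals of \<open>OK a1\<close> and multiplicative orders\<close>

lemma ideal_subset_OK: "ideal I (OK_ring a1) \<Longrightarrow> x \<in> I \<Longrightarrow> x \<in> OK a1"
  using ideal.Icarr by fastforce

lemma ideal_mult_OK: "ideal I (OK_ring a1) \<Longrightarrow> x \<in> OK a1 \<Longrightarrow> y \<in> I \<Longrightarrow> x * y \<in> I"
  using ideal.I_l_closed by fastforce

lemma ideal_add: "ideal I (OK_ring a1) \<Longrightarrow> x \<in> I \<Longrightarrow> y \<in> I \<Longrightarrow> x + y \<in> I"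
  using additive_subgroup.a_closed[OF ideal.axioms(1)] by fastforce

lemma ideal_diff: "ideal I (OK_ring a1) \<Longrightarrow> x \<in> I \<Longrightarrow> y \<in> I \<Longrightarrow> x - y \<in> I"
  using ideal_add[of I x "(-1) * y"] ideal_mult_OK[of I "-1" y] OK_of_int[of "-1"] by simp

lemma ideal_pow_ideal: "ideal I (OK_ring a1) \<Longrightarrow> ideal (ideal_pow (OK_ring a1) I v) (OK_ring a1)"
proof (induction v)
  case 0
  then show ?case using ring.oneideal[OF cring.axioms(1)[OF OK_cring]] by simp
next
  case (Suc v)
  then show ?case using ring.ideal_prod_is_ideal[OF cring.axioms(1)[OF OK_cring]] by simp
qed

lemma ideal_pow_1: "ideal I (OK_ring a1) \<Longrightarrow> ideal_pow (OK_ring a1) I 1 = I"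
  using ring.ideal_prod_one[OF cring.axioms(1)[OF OK_cring]] by simp

lemma power_in_ideal_pow: "ideal I (OK_ring a1) \<Longrightarrow> x \<in> I \<Longrightarrow> x ^ v \<in> ideal_pow (OK_ring a1) I v"
proof (induction v)
  case 0
  then show ?case using OK_of_int[of 1] by simp
next
  case (Suc v)
  then have "x \<otimes>\<^bsub>OK_ring a1\<^esub> x ^ v \<in> ideal_prod (OK_ring a1) I (ideal_pow (OK_ring a1) I v)"
    by (intro ideal_prod.prod) auto
  then show ?case by simp
qed

text \<open>By pigeonhole, two consecutive pairs of the Lucas sequence agree modulo \<open>M\<close>, so two
  powers of \<open>\<alpha>\<close> agree modulo \<open>M\<close>; as \<open>\<alpha>\<close> is a unit, some power is \<open>1\<close> modulo \<open>M\<close>.\<close>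
lemma alpha_sq_power_congruent_one:
  assumes I: "ideal I (OK_ring a1)" and M: "of_int M \<in> I" "M > 0"
  shows "\<exists>k>0. (\<alpha>^2) ^ k - 1 \<in> I"
proof -
  let ?U = "lucasU a1"
  obtain i j where ij: "i < j" and c2: "M dvd ?U j - ?U i" and c1: "M dvd ?U (Suc j) - ?U (Suc i)"
    using exists_consecutive_pair_congruent[OF M(2)] by blast
  obtain c1 c2 where c1: "?U (Suc j) - ?U (Suc i) = M * c1" and c2: "?U j - ?U i = M * c2"
    using c1 c2 by (auto elim!: dvdE)
  have diff: "\<alpha> ^ Suc j - \<alpha> ^ Suc i = (of_int c1 * \<alpha> + of_int c2) * of_int M"
  proof -
    have "\<alpha> ^ Suc j - \<alpha> ^ Suc i = of_int (?U (Suc j) - ?U (Suc i)) * \<alpha> + of_int (?U j - ?U i)"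
      unfolding power_Suc_lucasU[OF alpha_root] by (simp add: algebra_simps)
    then show ?thesis unfolding c1 c2 by (simp add: algebra_simps)
  qed
  have "of_int c1 * \<alpha> + of_int c2 \<in> OK a1" using OK_add OK_mult OK_of_int alpha_OK by blast
  then have "\<alpha> ^ Suc j - \<alpha> ^ Suc i \<in> I" unfolding diff by (rule ideal_mult_OK[OF I _ M(1)])
  then have in_I: "(- \<beta>) ^ Suc i * (\<alpha> ^ Suc j - \<alpha> ^ Suc i) \<in> I"
    using ideal_mult_OK[OF I] OK_power OK_uminus beta_OK by blast
  define k where "k = j - i"
  have "Suc j = Suc i + k" using ij unfolding k_def by simp
  then have aj: "\<alpha> ^ Suc j = \<alpha> ^ Suc i * \<alpha> ^ k" by (metis power_add)
  have factor: "b * (a * c - a) = (a * b) * (c - 1)" for a b c :: real by (simp add: algebra_simps)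
  have "(- \<beta>) ^ Suc i * (\<alpha> ^ Suc j - \<alpha> ^ Suc i) = (\<alpha> ^ Suc i * (- \<beta>) ^ Suc i) * (\<alpha> ^ k - 1)"
    unfolding aj by (rule factor)
  then have "\<alpha> ^ k - 1 \<in> I" using in_I unfolding alpha_mult_minus_beta_power mult_1_left by simp
  then have "(\<alpha> ^ k + 1) * (\<alpha> ^ k - 1) \<in> I"
    using ideal_mult_OK[OF I] OK_add OK_power OK_of_int[of 1] alpha_OK by simp
  moreover have "(\<alpha> ^ k + 1) * (\<alpha> ^ k - 1) = (\<alpha>^2) ^ k - 1"
    by (simp add: algebra_simps power2_eq_square power_mult_distrib)
  ultimately show ?thesis using ij unfolding k_def by (intro exI[of _ "j - i"]) auto
qed

lemma ord_mod_alpha_sq_dvd_iff: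
  assumes I: "ideal I (OK_ring a1)" and M: "of_int M \<in> I" "M > 0"
  shows "0 < ord_mod I (\<alpha>^2)" "(\<alpha>^2) ^ n - 1 \<in> I \<longleftrightarrow> ord_mod I (\<alpha>^2) dvd n"
proof -
  have inverse: "\<alpha>^2 * \<beta>^2 = 1" using alpha_mult_beta by (simp flip: power_mult_distrib)
  have mult: "\<alpha>^2 * x \<in> I" "\<beta>^2 * x \<in> I" if "x \<in> I" for x
    using ideal_mult_OK[OF I _ that] OK_power alpha_OK beta_OK by auto
  note ord = ord_mod_dvd_iff[of I "\<alpha>^2" "\<beta>^2", OF ideal_diff[OF I] mult inverse
      alpha_sq_power_congruent_one[OF I M]]
  show "0 < ord_mod I (\<alpha>^2)" by (rule ord(1))
  show "(\<alpha>^2) ^ n - 1 \<in> I \<longleftrightarrow> ord_mod I (\<alpha>^2) dvd n" by (rule ord(2))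
qed

end

section \<open>Prime ideals above an unramified prime \<open>p\<close>\<close>

locale lehmer_prime = lehmer_field +
  fixes p :: nat and P :: "real set"
  assumes prime_p: "prime p" and p_ndvd: "\<not> int p dvd a1 * qD a1"
    and P_primeideal: "primeideal P (OK_ring a1)" and p_in_P: "real p \<in> P"
begin

lemma P_ideal: "ideal P (OK_ring a1)"
  using P_primeideal primeideal.axioms(1) by blast

lemma one_notin_P: "1 \<notin> P"
proof
  assume "1 \<in> P"
  then have "P = carrier (OK_ring a1)" using ideal.one_imp_carrier[OF P_ideal] by simp
  then show False using primeideal.I_notcarr[OF P_primeideal] by simp
qed

lemma P_prime: "x \<in> OK a1 \<Longrightarrow> y \<in> OK a1 \<Longrightarrow> x * y \<in> P \<Longrightarrow> x \<in> P \<or> y \<in> P"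
  using primeideal.I_prime[OF P_primeideal] by fastforce

lemma power_notin_P: "\<tau> \<in> OK a1 \<Longrightarrow> \<tau> \<notin> P \<Longrightarrow> \<tau> ^ j \<notin> P"
  by (induction j) (use one_notin_P P_prime OK_power in auto)

lemma p_pos: "real p > 0"
  using prime_p prime_gt_0_nat by simp

lemma of_int_in_P_iff: "of_int m \<in> P \<longleftrightarrow> int p dvd m"
proof
  assume "int p dvd m"
  then obtain k where "m = int p * k" by (rule dvdE)
  then have "of_int m = of_int k * real p" by simp
  then show "of_int m \<in> P" using ideal_mult_OK[OF P_ideal OK_of_int p_in_P] by simp
next
  assume m: "of_int m \<in> P"
  show "int p dvd m"
  proof (rule ccontr)
    assume "\<not> int p dvd m"
    then have "coprime (int p) m" using prime_p by (simp add: prime_imp_coprime)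
    then obtain u w where "u * int p + w * m = 1" by (metis bezout_int coprime_iff_gcd_eq_1)
    then have "1 = of_int u * real p + of_int w * (of_int m :: real)"
      by (metis of_int_1 of_int_add of_int_mult of_int_of_nat_eq)
    moreover have "of_int u * real p + of_int w * of_int m \<in> P"
      using ideal_add[OF P_ideal ideal_mult_OK[OF P_ideal OK_of_int p_in_P] ideal_mult_OK[OF P_ideal OK_of_int m]] .
    ultimately show False using one_notin_P by simp
  qed
qed

lemma Ints_in_P_div_p:
  assumes "x \<in> P" "x \<in> \<int>"
  shows "x / real p \<in> \<int>"
proof -
  obtain m where m: "x = of_int m" using assms(2) by (auto elim: Ints_cases)
  have "int p dvd m" using assms(1) m of_int_in_P_iff by simp
  then obtain k where "m = int p * k" by (rule dvdE)
  then have "x / real p = of_int k" using m p_pos by simp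
  then show ?thesis by simp
qed

text \<open>The trace of \<open>x conj y\<close> lies in \<open>P \<inter> \<int> = p\<int>\<close> and its norm \<open>N(x) N(y)\<close> in \<open>p\<^sup>2\<int>\<close>.\<close>
lemma mult_conjK_div_p_OK:
  assumes x: "x \<in> P" and y: "y \<in> P"
  shows "x * conjK y / real p \<in> OK a1"
proof -
  have xO: "x \<in> OK a1" and yO: "y \<in> OK a1" using x y ideal_subset_OK[OF P_ideal] by auto
  define z where "z = x * conjK y"
  have zO: "z \<in> OK a1" unfolding z_def using OK_mult OK_conjK xO yO by auto
  have cz: "conjK z = conjK x * y" unfolding z_def
    using quadK_mult(2)[OF OK_quadK[OF xO] quadK_conjK(1)[OF OK_quadK[OF yO]]]
      quadK_conjK(2)[OF OK_quadK[OF yO]] by simp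
  have cw: "conjK (z / real p) = conjK z / real p" by (rule quadK_divide_of_nat(2)[OF OK_quadK[OF zO]])
  have "conjK y * x \<in> P" "conjK x * y \<in> P"
    using ideal_mult_OK[OF P_ideal] OK_conjK xO yO x y by simp_all
  then have "conjK y * x + conjK x * y \<in> P" by (rule ideal_add[OF P_ideal])
  moreover have "z + conjK z = conjK y * x + conjK x * y" unfolding cz by (simp add: z_def mult.commute)
  ultimately have "z + conjK z \<in> P" by simp
  then have trace: "(z + conjK z) / real p \<in> \<int>" using Ints_in_P_div_p OK_trace_norm_Ints(1)[OF zO] by blast
  have "conjK x * x \<in> P" "conjK y * y \<in> P" using ideal_mult_OK[OF P_ideal] OK_conjK xO yO x y by blast+
  then have "x * conjK x / real p \<in> \<int>" "y * conjK y / real p \<in> \<int>"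
    using Ints_in_P_div_p OK_trace_norm_Ints(2) xO yO by (simp_all add: mult.commute)
  then have "x * conjK x / real p * (y * conjK y / real p) \<in> \<int>" by (rule Ints_mult)
  with trace have "z / real p + conjK (z / real p) \<in> \<int>" "z / real p * conjK (z / real p) \<in> \<int>"
    unfolding cw cz by (simp_all add: z_def add_divide_distrib ac_simps)
  then show ?thesis
    using quadK_divide_of_nat(1)[OF OK_quadK[OF zO]] OK_iff_trace_norm unfolding z_def by blast
qed

lemma div_p_OK_if_conjK_stable:
  assumes stable: "\<forall>y\<in>P. conjK y \<in> P" and x: "x \<in> P"
  shows "x / real p \<in> OK a1"
proof -
  have xO: "x \<in> OK a1" using x ideal_subset_OK[OF P_ideal] by auto
  obtain r s where coords: "x = of_rat r + of_rat s * sqD" using OK_quadK[OF xO] quadK_iff by blast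
  obtain t where t: "x + conjK x = of_int t" using OK_trace_norm_Ints(1)[OF xO] by (auto elim: Ints_cases)
  obtain N where N: "x * conjK x = of_int N" using OK_trace_norm_Ints(2)[OF xO] by (auto elim: Ints_cases)
  have "int p dvd t" using t ideal_add[OF P_ideal x] stable x of_int_in_P_iff by metis
  have "int p dvd N" using N ideal_mult_OK[OF P_ideal OK_conjK[OF xO] x] of_int_in_P_iff
    by (metis mult.commute)
  have tr: "2 * r = of_int t" and nr: "r * r - s * s * of_int D = of_int N"
    using trace_norm_coords[OF coords] t N by (metis of_rat_eq_iff of_rat_of_int_eq)+
  define g where "g = 2 * s * of_int D"
  have "of_int ((t^2 - 4 * N) * D) = ((2 * r) * (2 * r) - 4 * (r * r - s * s * of_int D)) * (of_int D :: rat)"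
    unfolding tr nr by (simp add: power2_eq_square)
  also have "\<dots> = g * g" unfolding g_def by (simp add: algebra_simps)
  finally have disc: "g * g = of_int ((t^2 - 4 * N) * D)" by simp
  have "real_of_rat g * real_of_rat g = of_int ((t^2 - 4 * N) * D)"
    by (simp only: of_rat_mult[symmetric] disc of_rat_of_int_eq)
  then have "algebraic_int (real_of_rat g)"
    by (intro algebraic_int_of_monic_quadratic[of _ 0 "- ((t^2 - 4 * N) * D)"]) simp
  then have "real_of_rat g \<in> \<int>" using rational_algebraic_int_is_int Rats_of_rat by blast
  then obtain h where "real_of_rat g = of_int h" by (auto elim: Ints_cases)
  then have "g = of_int h" by (metis of_rat_eq_iff of_rat_of_int_eq)
  then have "(t^2 - 4 * N) * D = h^2" using disc by (metis of_int_eq_iff of_int_mult power2_eq_square)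
  moreover have "p = 2 \<Longrightarrow> D mod 4 = 1"
  proof -
    assume "p = 2"
    then have "odd a1" using p_ndvd by (metis dvd_mult2 of_nat_numeral)
    then obtain k where "a1 = 2 * k + 1" by (blast elim: oddE)
    then have "D = 4 * (k * k + k + 1) + 1" by (simp add: qD_def power2_eq_square algebra_simps)
    then show "D mod 4 = 1" by presburger
  qed
  moreover have "prime (int p)" "\<not> int p dvd D" using prime_p p_ndvd by (auto simp: dvd_mult)
  ultimately have "int p ^ 2 dvd N"
    using prime_square_dvd_of_discriminant_square \<open>int p dvd t\<close> \<open>int p dvd N\<close> by simp
  then obtain N' where N': "N = int p ^ 2 * N'" by blast
  obtain t' where t': "t = int p * t'" using \<open>int p dvd t\<close> by blast
  have cw: "conjK (x / real p) = conjK x / real p" by (rule quadK_divide_of_nat(2)[OF OK_quadK[OF xO]])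
  have "x / real p + conjK (x / real p) = of_int t'" "x / real p * conjK (x / real p) = of_int N'"
    unfolding cw using t t' N N' p_pos by (simp_all add: add_divide_distrib[symmetric] power2_eq_square)
  then show ?thesis
    using quadK_divide_of_nat(1)[OF OK_quadK[OF xO]] OK_iff_trace_norm by auto
qed

text \<open>An element outside \<open>P\<close> multiplying \<open>P\<close> into \<open>p OK\<close> stands in for the inverse ideal of \<open>P\<close>.
  If \<open>P\<close> is not stable under conjugation, the conjugate of a suitable element of \<open>P\<close> does;
  otherwise \<open>P\<close> lies over an unramified \<open>p\<close> and \<open>P \<subseteq> p OK\<close> already.\<close>
lemma exists_P_multiplier:
  obtains \<tau> where "\<tau> \<in> OK a1" "\<tau> \<notin> P" "\<forall>x\<in>P. \<tau> * x / real p \<in> OK a1"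
proof (cases "\<forall>y\<in>P. conjK y \<in> P")
  case True
  then show thesis using that[of 1] div_p_OK_if_conjK_stable one_notin_P OK_of_int[of 1] by auto
next
  case False
  then obtain y where y: "y \<in> P" "conjK y \<notin> P" by blast
  then show thesis
    using that[of "conjK y"] mult_conjK_div_p_OK[OF _ y(1)] OK_conjK ideal_subset_OK[OF P_ideal]
    by (auto simp: mult.commute)
qed

lemma multiplier_power_ideal_pow:
  assumes \<tau>: "\<forall>x\<in>P. \<tau> * x / real p \<in> OK a1"
  shows "x \<in> ideal_pow (OK_ring a1) P j \<Longrightarrow> \<tau> ^ j * x / real p ^ j \<in> OK a1"
proof (induction j arbitrary: x)
  case (Suc j)
  then have "x \<in> ideal_prod (OK_ring a1) P (ideal_pow (OK_ring a1) P j)" by simp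
  then show ?case
  proof (induction x rule: ideal_prod.induct)
    case (prod i k)
    have "\<tau> ^ Suc j * (i \<otimes>\<^bsub>OK_ring a1\<^esub> k) / real p ^ Suc j = (\<tau> * i / real p) * (\<tau> ^ j * k / real p ^ j)"
      by simp
    moreover have "\<tau> * i / real p \<in> OK a1" "\<tau> ^ j * k / real p ^ j \<in> OK a1"
      using \<tau> prod Suc.IH by auto
    ultimately show ?case using OK_mult by metis
  next
    case (sum s1 s2)
    then show ?case using OK_add by (simp add: distrib_left add_divide_distrib)
  qed
qed simp

lemma dvd_if_multiplier_power:
  assumes "\<tau> \<in> OK a1" "\<tau> \<notin> P"
  shows "\<tau> ^ j * of_int m / real p ^ i \<in> OK a1 \<Longrightarrow> int p ^ i dvd m"
proof (induction i arbitrary: m)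
  case (Suc i)
  define w where "w = \<tau> ^ j * of_int m / real p ^ Suc i"
  have "\<tau> ^ j * of_int m = (real p ^ i * w) * real p" unfolding w_def using p_pos by simp
  moreover have "real p ^ i * w \<in> OK a1"
    using OK_mult OK_power OK_of_nat Suc.prems unfolding w_def by blast
  then have "(real p ^ i * w) * real p \<in> P" by (rule ideal_mult_OK[OF P_ideal _ p_in_P])
  ultimately have "of_int m \<in> P" using P_prime OK_power OK_of_int power_notin_P assms by metis
  then have "int p dvd m" using of_int_in_P_iff by simp
  then obtain m' where m': "m = int p * m'" by (rule dvdE)
  have "\<tau> ^ j * of_int m' / real p ^ i = w" unfolding w_def m' using p_pos by simp
  then have "int p ^ i dvd m'" using Suc.IH Suc.prems unfolding w_def by simp
  then show ?case unfolding m' by simp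
qed simp

lemma of_int_in_ideal_pow_dvd: "of_int m \<in> ideal_pow (OK_ring a1) P v \<Longrightarrow> int p ^ v dvd m"
  using exists_P_multiplier multiplier_power_ideal_pow dvd_if_multiplier_power by metis

lemma coprime_lehmer_denom_square: "coprime (int p) (if odd n then a1^2 else a1^2 * D)"
  using p_ndvd prime_p by (auto simp: prime_imp_coprime prime_dvd_mult_iff prime_dvd_power_iff)

text \<open>By \<open>alpha_sq_power_minus_one\<close>, \<open>(\<alpha>\<^sup>2)\<^sup>n - 1\<close> and \<open>lehmer a1 n\<close> differ by the unit
  \<open>\<alpha>\<^sup>n\<close> and by \<open>lehmer_denom n\<close>, whose square is an integer prime to \<open>p\<close>.\<close>
lemma rdvd_lehmer_iff:
  assumes n: "n \<ge> 1"
  shows "rdvd (int p ^ v) (lehmer a1 n) \<longleftrightarrow> (\<alpha>^2) ^ n - 1 \<in> ideal_pow (OK_ring a1) P v"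
proof -
  define I where "I = ideal_pow (OK_ring a1) P v"
  have I: "ideal I (OK_ring a1)" unfolding I_def using ideal_pow_ideal[OF P_ideal] .
  have pv: "real p ^ v \<in> I" unfolding I_def using power_in_ideal_pow[OF P_ideal p_in_P] .
  define L where "L = lehmerZ n"
  have L: "lehmer a1 n = of_int L" unfolding L_def using of_int_lehmerZ[OF n] by simp
  have id: "(\<alpha>^2) ^ n - 1 = \<alpha> ^ n * lehmer_denom n * of_int L"
    using alpha_sq_power_minus_one[of n] unfolding L .
  have "int p ^ v dvd L \<longleftrightarrow> (\<alpha>^2) ^ n - 1 \<in> I"
  proof
    assume "int p ^ v dvd L"
    then obtain z where z: "L = int p ^ v * z" by blast
    have "(\<alpha>^2) ^ n - 1 = (\<alpha> ^ n * lehmer_denom n * of_int z) * real p ^ v" unfolding id z by simp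
    then show "(\<alpha>^2) ^ n - 1 \<in> I"
      using ideal_mult_OK[OF I _ pv] OK_mult OK_power alpha_OK lehmer_denom_OK OK_of_int by simp
  next
    assume "(\<alpha>^2) ^ n - 1 \<in> I"
    then have "(- \<beta>) ^ n * ((\<alpha>^2) ^ n - 1) \<in> I"
      using ideal_mult_OK[OF I] OK_power OK_uminus beta_OK by blast
    moreover have "(- \<beta>) ^ n * ((\<alpha>^2) ^ n - 1) = lehmer_denom n * of_int L"
      using alpha_mult_minus_beta_power[of n] unfolding id by (simp add: algebra_simps)
    ultimately have "lehmer_denom n * (lehmer_denom n * of_int L) \<in> I"
      using ideal_mult_OK[OF I lehmer_denom_OK] by simp
    moreover have "lehmer_denom n * (lehmer_denom n * of_int L) = lehmer_denom n ^ 2 * of_int L"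
      by (simp add: power2_eq_square)
    ultimately have in_I: "of_int ((if odd n then a1^2 else a1^2 * D) * L) \<in> I"
      unfolding lehmer_denom_square of_int_mult by simp
    obtain u w where uw: "u * (if odd n then a1^2 else a1^2 * D) + w * int p ^ v = 1"
      using coprime_lehmer_denom_square[of n] by (metis bezout_int coprime_iff_gcd_eq_1 coprime_commute coprime_power_right_iff)
    have "of_int L = of_int u * of_int ((if odd n then a1^2 else a1^2 * D) * L) + of_int (w * L) * real p ^ v"
      using arg_cong[OF uw, of "\<lambda>z. real_of_int (z * L)"] by (simp add: algebra_simps)
    also have "\<dots> \<in> I"
      using ideal_add[OF I ideal_mult_OK[OF I OK_of_int in_I] ideal_mult_OK[OF I OK_of_int pv]] .
    finally show "int p ^ v dvd L" using of_int_in_ideal_pow_dvd unfolding I_def by blast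
  qed
  then show ?thesis unfolding L I_def by simp
qed

lemma ord_mod_ideal_pow_dvd_iff:
  "0 < ord_mod (ideal_pow (OK_ring a1) P v) (\<alpha>^2)"
  "(\<alpha>^2) ^ n - 1 \<in> ideal_pow (OK_ring a1) P v \<longleftrightarrow> ord_mod (ideal_pow (OK_ring a1) P v) (\<alpha>^2) dvd n"
proof -
  have "of_int (int p ^ v) \<in> ideal_pow (OK_ring a1) P v"
    using power_in_ideal_pow[OF P_ideal p_in_P] by simp
  moreover have "int p ^ v > 0" using prime_p by (simp add: prime_gt_0_nat)
  ultimately show "0 < ord_mod (ideal_pow (OK_ring a1) P v) (\<alpha>^2)"
    "(\<alpha>^2) ^ n - 1 \<in> ideal_pow (OK_ring a1) P v \<longleftrightarrow> ord_mod (ideal_pow (OK_ring a1) P v) (\<alpha>^2) dvd n"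
    using ord_mod_alpha_sq_dvd_iff[OF ideal_pow_ideal[OF P_ideal]] by blast+
qed

lemma rdvd_lehmer_iff_ord_mod_dvd:
  assumes "n \<ge> 1"
  shows "rdvd (int p ^ v) (lehmer a1 n) \<longleftrightarrow> ord_mod (ideal_pow (OK_ring a1) P v) (\<alpha>^2) dvd n"
  using rdvd_lehmer_iff[OF assms] ord_mod_ideal_pow_dvd_iff(2) by simp

lemma p_dvd_lehmerZ_iff:
  assumes "n \<ge> 1"
  shows "int p dvd lehmerZ n \<longleftrightarrow> ord_mod P (\<alpha>^2) dvd n"
  using rdvd_lehmer_iff_ord_mod_dvd[OF assms, of 1] of_int_lehmerZ[OF assms] ideal_pow_1[OF P_ideal]
  by (metis power_one_right rdvd_of_int_iff)

lemma primitive_divisor_iff_ord_mod: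
  assumes n: "n \<ge> 1"
  shows "primitive_divisor a1 p n \<longleftrightarrow> n = ord_mod P (\<alpha>^2)"
proof -
  define d where "d = ord_mod P (\<alpha>^2)"
  have "0 < d" unfolding d_def using ord_mod_ideal_pow_dvd_iff(1)[of 1] ideal_pow_1[OF P_ideal] by simp
  have "(\<alpha>^2 - \<beta>^2)^2 = of_int (a1^2 * D)" using lehmer_denom_square[of 2] by (simp add: lehmer_denom_def)
  moreover have "(\<Prod>k\<in>{1..<n}. lehmer a1 k) = of_int (\<Prod>k\<in>{1..<n}. lehmerZ k)"
    by (simp add: of_int_lehmerZ)
  ultimately have "(\<alpha>^2 - \<beta>^2)^2 * (\<Prod>k\<in>{1..<n}. lehmer a1 k) = of_int (a1^2 * D * (\<Prod>k\<in>{1..<n}. lehmerZ k))"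
    by simp
  then have "primitive_divisor a1 p n \<longleftrightarrow>
      int p dvd lehmerZ n \<and> \<not> int p dvd a1^2 * D * (\<Prod>k\<in>{1..<n}. lehmerZ k)"
    unfolding primitive_divisor_def using prime_p of_int_lehmerZ[OF n] by (metis rdvd_of_int_iff)
  also have "\<dots> \<longleftrightarrow> d dvd n \<and> (\<forall>k\<in>{1..<n}. \<not> d dvd k)"
    using prime_p coprime_lehmer_denom_square[of 2] p_dvd_lehmerZ_iff n unfolding d_def
    by (auto simp: prime_dvd_mult_iff prime_dvd_prod_iff prime_dvd_power_iff)
  also have "\<dots> \<longleftrightarrow> n = d" using dvd_iff_least_multiple[OF \<open>0 < d\<close> n] .
  finally show ?thesis unfolding d_def .
qed

end

theorem mainTheorem7:
  fixes a1 :: int and n v p :: nat and P :: "real set"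
  assumes "a1 \<ge> 1" and "n \<ge> 1" and "v \<ge> 1"
    and "prime p" and "\<not> int p dvd a1 * qD a1"
    and "primeideal P (OK_ring a1)" and "real p \<in> P"
  shows "(rdvd (int p ^ v) (lehmer a1 n) \<longleftrightarrow>
            ord_mod (ideal_pow (OK_ring a1) P v) (alpha a1 ^ 2) dvd n)
       \<and> (primitive_divisor a1 p n \<longleftrightarrow> n = ord_mod P (alpha a1 ^ 2))"
proof -
  have "cring (OK_ring a1)" using assms(6) primeideal.axioms(2) by blast
  then interpret lehmer_prime a1 p P
    using assms by (intro lehmer_prime.intro lehmer_field.intro lehmer_prime_axioms.intro) auto
  show ?thesis
    using rdvd_lehmer_iff_ord_mod_dvd primitive_divisor_iff_ord_mod \<open>n \<ge> 1\<close> by blast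
qed

end
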